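(* Let $\rho$ and $\varrho$ be two-qubit states with correlation matrices $T$ and $F$, respectively, and let $t_1,t_2,t_3$ and $f_1,f_2,f_3$ be (signed) singular values of $T$ and $F$. Then $\rho$ and $\varrho$ have the same optimal CHSH operator if and only if the following three conditions hold: (1) $T$ and $F$ have the same orthogonal matrices in their singular value decompositions, i.e. $T=UDV$ and $F=UEV$ with $U,V$ real orthogonal $3\times3$ matrices, $D=\sum_{k=1}^3 t_k|k\rangle\langle k|$ and $E=\sum_{k=1}^3 f_k|k\rangle\langle k|$; (2) the two sets of absolute values $\{|t_k|\}$ and $\{|f_k|\}$ are in the same order (i.e. an index ordering that makes $|t_k|$ nonincreasing also makes $|f_k|$ nonincreasing); (3) labelling so that $|t_1|\ge|t_2|\ge|t_3|$ and $|f_1|\ge|f_2|\ge|f_3|$, one has $$\frac{t_1}{f_1}=\frac{t_2}{f_2}=\sqrt{\frac{t_1^2+t_2^2}{f_1^2+f_2^2}}.$$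
   Context: $\sigma_1,\sigma_2,\sigma_3$ are the Pauli matrices. The correlation matrix of a two-qubit state $\rho$ is the real $3\times3$ matrix $T$ with $T_{jk}=\mathrm{tr}(\rho\,\sigma_j\otimes\sigma_k)$. A singular value decomposition here means $T=UDV$ with $U,V$ real orthogonal and $D$ real diagonal, whose diagonal entries (the singular values) are allowed to carry signs. A CHSH operator is an operator $S=A\otimes(B+B')+A'\otimes(B-B')$ with $A=\vec a\cdot\vec\sigma$, $A'=\vec a'\cdot\vec\sigma$, $B=\vec b\cdot\vec\sigma$, $B'=\vec b'\cdot\vec\sigma$ for unit vectors $\vec a,\vec a',\vec b,\vec b'\in\mathbb{R}^3$. The nonlocality is $\mathcal{N}(\rho)=\max_S\mathrm{tr}(\rho S)$ over all CHSH operators; $S$ is an optimal CHSH operator of $\rho$ if $\mathrm{tr}(\rho S)=\mathcal{N}(\rho)$. Two states have the same optimal CHSH operator if some CHSH operator is optimal for both. *)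

theory Defs
  imports "HOL-Analysis.Analysis"
begin

text \<open>Qubit operators are 2x2 complex matrices indexed by the type 2;
two-qubit operators are 4x4 complex matrices indexed by the type 2 \<times> 2
(first component = first qubit, second component = second qubit).\<close>

type_synonym qop = "complex^2^2"
type_synonym qop2 = "complex^(2 \<times> 2)^(2 \<times> 2)"

definition sigma1 :: qop where "sigma1 = vector [vector [0, 1], vector [1, 0]]"
definition sigma2 :: qop where "sigma2 = vector [vector [0, - \<i>], vector [\<i>, 0]]"
definition sigma3 :: qop where "sigma3 = vector [vector [1, 0], vector [0, -1]]"

definition pauli :: "3 \<Rightarrow> qop" where
  "pauli j = (if j = 1 then sigma1 else if j = 2 then sigma2 else sigma3)"

definition kron :: "qop \<Rightarrow> qop \<Rightarrow> qop2" where
  "kron A B = (\<chi> p q. A $ fst p $ fst q * B $ snd p $ snd q)"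

definition pauli_dot :: "real^3 \<Rightarrow> qop" where
  "pauli_dot a = (\<chi> i k. \<Sum>j\<in>UNIV. complex_of_real (a $ j) * pauli j $ i $ k)"

definition hermitian2 :: "qop2 \<Rightarrow> bool" where
  "hermitian2 \<rho> \<longleftrightarrow> (\<forall>p q. \<rho> $ p $ q = cnj (\<rho> $ q $ p))"

definition psd2 :: "qop2 \<Rightarrow> bool" where
  "psd2 \<rho> \<longleftrightarrow> hermitian2 \<rho> \<and>
     (\<forall>v :: complex^(2 \<times> 2). 0 \<le> Re (\<Sum>p\<in>UNIV. \<Sum>q\<in>UNIV. cnj (v $ p) * \<rho> $ p $ q * v $ q))"

definition two_qubit_state :: "qop2 \<Rightarrow> bool" where
  "two_qubit_state \<rho> \<longleftrightarrow> psd2 \<rho> \<and> trace \<rho> = 1"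

text \<open>Correlation matrix T_jk = tr(rho sigma_j (x) sigma_k) (a real number for Hermitian rho).\<close>
definition correlation :: "qop2 \<Rightarrow> real^3^3" where
  "correlation \<rho> = (\<chi> j k. Re (trace (\<rho> ** kron (pauli j) (pauli k))))"

definition diag3 :: "real^3 \<Rightarrow> real^3^3" where
  "diag3 d = (\<chi> i j. if i = j then d $ i else 0)"

definition chsh_ops :: "qop2 set" where
  "chsh_ops = {kron (pauli_dot a) (pauli_dot b + pauli_dot b') + kron (pauli_dot a') (pauli_dot b - pauli_dot b')
              | a a' b b'. norm a = 1 \<and> norm a' = 1 \<and> norm b = 1 \<and> norm b' = 1}"

definition chsh_expect :: "qop2 \<Rightarrow> qop2 \<Rightarrow> real" where
  "chsh_expect \<rho> S = Re (trace (\<rho> ** S))"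

definition nonlocality :: "qop2 \<Rightarrow> real" where
  "nonlocality \<rho> = (SUP S\<in>chsh_ops. chsh_expect \<rho> S)"

definition optimal_chsh :: "qop2 \<Rightarrow> qop2 \<Rightarrow> bool" where
  "optimal_chsh \<rho> S \<longleftrightarrow> S \<in> chsh_ops \<and> chsh_expect \<rho> S = nonlocality \<rho>"

end

theory Submission
  imports Defs
begin

(* For a CHSH operator S = A (x) (B + B') + A' (x) (B - B') one has tr(rho S) = <T, M>, the
   Frobenius inner product of the correlation matrix T with M = a (b + b')^T + a' (b - b')^T, and
   the matrices M arising this way are exactly the singular 3x3 matrices of Frobenius norm 2.
   Optimal CHSH operators therefore correspond to maximisers of M |-> <T, M> on this set.

   For T = U diag(t) V with |t1| >= |t2| >= |t3| the maximum is 2 sqrt(t1^2 + t2^2): a unit kernel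
   vector n of M gives <T, M> = <T (1 - n n^T), M> <= 2 |T (1 - n n^T)|, and the bound is attained
   at M = 2 U diag(t1, t2, 0) V / sqrt(t1^2 + t2^2).  Conversely, write a maximiser as
   M = W diag(s1, s2, 0) Z.  First-order conditions along perturbations of M that stay singular,
   together with competitors supported on two entries, force T = W diag(c s1, c s2, tau) Z with
   c >= 0 and |tau| <= c s2.  So a common maximiser gives a common singular value decomposition
   with proportional leading singular values, and proportional leading singular values make the
   maximiser for one matrix a maximiser for the other. *)

unbundle cross3_syntax

section \<open>Frobenius inner product and orthogonal equivalence\<close>

lemma inner_matrix_mult_left:
  fixes A :: "real^'n^'m" and B :: "real^'p^'n"
  shows "inner (A ** B) C = inner B (transpose A ** C)"
  unfolding inner_vec_def matrix_matrix_mult_def transpose_def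
  by (simp add: sum_distrib_left sum_distrib_right mult_ac sum.swap[of _ "UNIV::'m set"])
    (rule sum.cong[OF refl], rule sum.swap)

lemma inner_matrix_mult_right:
  fixes A :: "real^'n^'m" and B :: "real^'p^'n"
  shows "inner (A ** B) C = inner A (C ** transpose B)"
  unfolding inner_vec_def matrix_matrix_mult_def transpose_def
  by (simp add: sum_distrib_left sum_distrib_right mult_ac)
    (rule sum.cong[OF refl], rule sum.swap)

lemma inner_matrix_sandwich:
  fixes U :: "real^'m^'m" and V :: "real^'n^'n"
  shows "inner (U ** X ** V) Y = inner X (transpose U ** Y ** transpose V)"
proof -
  have "inner (U ** X ** V) Y = inner (X ** V) (transpose U ** Y)"
    by (simp add: inner_matrix_mult_left matrix_mul_assoc[symmetric])
  also have "\<dots> = inner X (transpose U ** Y ** transpose V)"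
    by (simp add: inner_matrix_mult_right)
  finally show ?thesis .
qed

lemma orthogonal_sandwich_cancel:
  fixes U :: "real^'m^'m" and V :: "real^'n^'n"
  assumes "orthogonal_matrix U" "orthogonal_matrix V"
  shows "transpose U ** (U ** X ** V) ** transpose V = X"
    and "U ** (transpose U ** X ** transpose V) ** V = X"
proof -
  have "transpose U ** (U ** X ** V) ** transpose V = (transpose U ** U) ** X ** (V ** transpose V)"
    by (simp add: matrix_mul_assoc)
  then show "transpose U ** (U ** X ** V) ** transpose V = X"
    using assms by (simp add: orthogonal_matrix_def)
  have "U ** (transpose U ** X ** transpose V) ** V = (U ** transpose U) ** X ** (transpose V ** V)"
    by (simp add: matrix_mul_assoc)
  then show "U ** (transpose U ** X ** transpose V) ** V = X"
    using assms by (simp add: orthogonal_matrix_def)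
qed

lemma inner_orthogonal_sandwich:
  fixes U :: "real^'m^'m" and V :: "real^'n^'n"
  assumes "orthogonal_matrix U" "orthogonal_matrix V"
  shows "inner (U ** X ** V) (U ** Y ** V) = inner X Y"
  using assms by (simp add: inner_matrix_sandwich orthogonal_sandwich_cancel)

lemma norm_orthogonal_sandwich:
  fixes U :: "real^'m^'m" and V :: "real^'n^'n"
  assumes "orthogonal_matrix U" "orthogonal_matrix V"
  shows "norm (U ** X ** V) = norm X"
  using inner_orthogonal_sandwich[OF assms, of X X] by (simp add: norm_eq_sqrt_inner)

lemma det_orthogonal_sandwich_eq_0:
  fixes U V X :: "real^'n^'n"
  assumes "orthogonal_matrix U" "orthogonal_matrix V"
  shows "det (U ** X ** V) = 0 \<longleftrightarrow> det X = 0"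
proof -
  have "det U \<noteq> 0" "det V \<noteq> 0"
    using det_orthogonal_matrix[OF assms(1)] det_orthogonal_matrix[OF assms(2)] by auto
  then show ?thesis by (simp add: det_mul)
qed

lemma matrix_add_rdistrib: "((A::'a::semiring_1^'n^'m) + B) ** C = A ** C + B ** C"
  by (vector matrix_matrix_mult_def sum.distrib[symmetric] field_simps)

lemma matrix_diff_ldistrib: "(A::'a::ring_1^'n^'m) ** (B - C) = A ** B - A ** C"
  by (vector matrix_matrix_mult_def sum_subtractf[symmetric] field_simps)

lemma det_scaleR_3: "det (c *\<^sub>R (A::real^3^3)) = c^3 * det A"
  by (simp add: det_3 algebra_simps power3_eq_cube)

lemma exists_unit_kernel_vector:
  fixes A :: "real^'n^'n"
  assumes "det A = 0"
  obtains n where "norm n = 1" "A *v n = 0"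
proof -
  have "\<not> (\<exists>B. B ** A = mat 1)"
    using assms invertible_det_nz by (meson invertible_def matrix_left_right_inverse)
  then obtain x where "A *v x = 0" "x \<noteq> 0"
    using matrix_left_invertible_ker by blast
  then show thesis
    by (intro that[of "(1 / norm x) *\<^sub>R x"]) (simp_all add: matrix_vector_mult_scaleR)
qed

lemma diag3_0 [simp]: "diag3 0 = 0"
  by (simp add: diag3_def vec_eq_iff)

lemma det_diag3: "det (diag3 s) = s$1 * s$2 * s$3"
  by (simp add: det_3 diag3_def)

lemma inner_diag3: "inner (diag3 s) (diag3 m) = s$1 * m$1 + s$2 * m$2 + s$3 * m$3"
  by (simp add: inner_vec_def diag3_def sum_3)

lemma axis_axis_mult_diag3: "axis p (axis q 1) ** diag3 s = axis p (axis q (s$q))"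
  by (simp add: vec_eq_iff matrix_matrix_mult_def axis_def diag3_def sum_3 forall_3)

lemma diag3_mult_axis_axis: "diag3 s ** axis p (axis q 1) = axis p (axis q (s$p))"
  by (simp add: vec_eq_iff matrix_matrix_mult_def axis_def diag3_def sum_3 forall_3)

lemma inner_axis_axis_matrix: "inner A (axis p (axis q c)) = A $ p $ q * c"
  by (simp add: inner_axis)

lemma UNIV_3_distinct: "distinct [i, j, k :: 3] \<Longrightarrow> UNIV = {i, j, k}"
  using exhaust_3[of i] exhaust_3[of j] exhaust_3[of k] by (auto simp: UNIV_3)

lemma sum_3_distinct: "distinct [i, j, k :: 3] \<Longrightarrow> sum f UNIV = f i + f j + f k"
  by (simp add: UNIV_3_distinct add_ac)

lemma exists_third_index: "\<exists>r::3. r \<noteq> p \<and> r \<noteq> p'"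
  by (rule exI[of _ "if p \<noteq> 1 \<and> p' \<noteq> 1 then 1 else if p \<noteq> 2 \<and> p' \<noteq> 2 then 2 else 3"])
    (use exhaust_3[of p] exhaust_3[of p'] in auto)

section \<open>Singular value decomposition of real 3x3 matrices\<close>

lemma linear_coeff_eq_0_if_nonpos_near_0:
  fixes k c \<delta> :: real
  assumes "\<delta> > 0" and nonpos: "\<And>t. \<bar>t\<bar> < \<delta> \<Longrightarrow> t * k + t\<^sup>2 * c \<le> 0"
  shows "k = 0"
proof (rule ccontr)
  assume "k \<noteq> 0"
  define e where "e = min (\<delta>/2) (\<bar>k\<bar>/(\<bar>c\<bar>+1))"
  have e0: "e > 0" using \<open>k \<noteq> 0\<close> assms(1) by (simp add: e_def)
  have "e \<le> \<bar>k\<bar>/(\<bar>c\<bar>+1)" by (simp add: e_def)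
  then have small: "e * (\<bar>c\<bar>+1) \<le> \<bar>k\<bar>" by (simp add: field_simps)
  have "sgn k * e * k + (sgn k * e)\<^sup>2 * c \<le> 0"
    using nonpos[of "sgn k * e"] e0 assms(1) \<open>k \<noteq> 0\<close> by (simp add: e_def abs_mult)
  moreover have "(sgn k)\<^sup>2 = 1" "k * sgn k = \<bar>k\<bar>"
    using \<open>k \<noteq> 0\<close> by (auto simp: sgn_if)
  ultimately have "e * \<bar>k\<bar> + e\<^sup>2 * c \<le> 0"
    by (simp add: power_mult_distrib mult_ac)
  moreover have "- (e\<^sup>2 * \<bar>c\<bar>) \<le> e\<^sup>2 * c"
    using mult_left_mono[of "-\<bar>c\<bar>" c "e\<^sup>2"] by simp
  ultimately have "e * \<bar>k\<bar> \<le> e * (e * \<bar>c\<bar>)"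
    by (simp add: power2_eq_square)
  then have "\<bar>k\<bar> \<le> e * \<bar>c\<bar>"
    using e0 by simp
  with small e0 \<open>k \<noteq> 0\<close> show False
    by (simp add: algebra_simps)
qed

lemma norm_le_if_norm_le_on_unit_vectors:
  fixes A :: "real^'n^'m"
  assumes "\<And>y. P y \<Longrightarrow> norm y = 1 \<Longrightarrow> norm (A *v y) \<le> s"
    and "\<And>y c. P y \<Longrightarrow> P (c *\<^sub>R y)" and "P y"
  shows "norm (A *v y) \<le> s * norm y"
proof (cases "y = 0")
  case False
  define u where "u = (1 / norm y) *\<^sub>R y"
  have "norm (A *v u) \<le> s"
    using assms False by (simp add: u_def)
  moreover have "A *v u = (1 / norm y) *\<^sub>R (A *v y)"
    by (simp add: u_def matrix_vector_mult_scaleR)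
  ultimately show ?thesis
    using False by (simp add: divide_le_eq mult.commute)
qed simp

lemma maximal_stretch_orthogonal:
  fixes A :: "real^'n^'m"
  assumes "norm y = 1" "inner y z = 0"
    and max: "\<And>t. norm (A *v (y + t *\<^sub>R z)) \<le> norm (A *v y) * norm (y + t *\<^sub>R z)"
  shows "inner (A *v y) (A *v z) = 0"
proof -
  define s where "s = norm (A *v y)"
  have "t * (2 * inner (A *v y) (A *v z)) + t\<^sup>2 * ((norm (A *v z))\<^sup>2 - s\<^sup>2 * (norm z)\<^sup>2) \<le> 0" for t
  proof -
    have "(norm (A *v (y + t *\<^sub>R z)))\<^sup>2 \<le> (s * norm (y + t *\<^sub>R z))\<^sup>2"
      using max[of t] by (simp add: s_def power_mono)
    moreover have "(norm (A *v (y + t *\<^sub>R z)))\<^sup>2 =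
        s\<^sup>2 + 2 * t * inner (A *v y) (A *v z) + t\<^sup>2 * (norm (A *v z))\<^sup>2"
      unfolding s_def matrix_vector_right_distrib matrix_vector_mult_scaleR power2_norm_eq_inner
      by (simp add: inner_add_left inner_add_right inner_commute power2_eq_square algebra_simps)
    moreover have "(norm (y + t *\<^sub>R z))\<^sup>2 = 1 + t\<^sup>2 * (norm z)\<^sup>2"
      using assms(1,2) unfolding power2_norm_eq_inner
      by (simp add: norm_eq_1 inner_add_left inner_add_right inner_commute power2_eq_square)
    ultimately show ?thesis
      by (simp add: power_mult_distrib algebra_simps)
  qed
  then show ?thesis
    using linear_coeff_eq_0_if_nonpos_near_0[of 1] by fastforce
qed

definition orthonormal3 :: "real^3 \<Rightarrow> real^3 \<Rightarrow> real^3 \<Rightarrow> bool" where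
  "orthonormal3 x1 x2 x3 \<longleftrightarrow> norm x1 = 1 \<and> norm x2 = 1 \<and> norm x3 = 1 \<and>
     inner x1 x2 = 0 \<and> inner x1 x3 = 0 \<and> inner x2 x3 = 0"

lemma orthonormal3_cross:
  assumes "norm x1 = 1" "norm x2 = 1" "inner x1 x2 = 0"
  shows "orthonormal3 x1 x2 (x1 \<times> x2)"
proof -
  have "(norm (x1 \<times> x2))\<^sup>2 = 1\<^sup>2"
    using norm_cross[of x1 x2] assms by simp
  then have "norm (x1 \<times> x2) = 1"
    using power2_eq_imp_eq norm_ge_zero zero_le_one by blast
  then show ?thesis
    using assms dot_cross_self(1,3)[of x1 x2] by (simp add: orthonormal3_def inner_commute)
qed

lemma orthogonal_matrix_orthonormal3_rows:
  assumes "orthonormal3 x1 x2 x3"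
  shows "orthogonal_matrix (vector [x1, x2, x3] :: real^3^3)"
proof -
  have "row i (vector [x1, x2, x3] :: real^3^3) = (vector [x1, x2, x3] :: real^3^3) $ i" for i
    by (simp add: row_def vec_eq_iff)
  then show ?thesis
    using assms unfolding orthogonal_matrix_orthonormal_rows
    by (auto simp: forall_3 orthogonal_def inner_commute orthonormal3_def)
qed

lemma orthonormal3_expansion:
  assumes "orthonormal3 x1 x2 x3"
  shows "v = inner x1 v *\<^sub>R x1 + inner x2 v *\<^sub>R x2 + inner x3 v *\<^sub>R x3"
proof -
  define Q where "Q = (vector [x1, x2, x3] :: real^3^3)"
  have "transpose Q ** Q = mat 1"
    using orthogonal_matrix_orthonormal3_rows[OF assms] by (simp add: Q_def orthogonal_matrix_def)
  then have "v = (transpose Q ** Q) *v v" by simp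
  also have "\<dots> = inner x1 v *\<^sub>R x1 + inner x2 v *\<^sub>R x2 + inner x3 v *\<^sub>R x3"
    unfolding Q_def
    by (simp add: vec_eq_iff matrix_vector_mult_def matrix_matrix_mult_def transpose_def
        inner_vec_def sum_3 forall_3 algebra_simps)
  finally show ?thesis .
qed

lemma exists_unit_orthogonal: "\<exists>z::real^3. norm z = 1 \<and> inner y z = 0"
proof (cases "y = 0")
  case True
  then show ?thesis using norm_axis_1 by (intro exI[of _ "axis 1 1"]) simp
next
  case False
  have "y \<times> axis 1 1 \<noteq> 0 \<or> y \<times> axis 2 1 \<noteq> 0"
    using False by (auto simp: cross3_def vec_eq_iff forall_3 axis_def)
  then obtain w where "w \<noteq> 0" "inner y w = 0"
    using dot_cross_self(1) by blast
  then show ?thesis by (intro exI[of _ "(1 / norm w) *\<^sub>R w"]) simp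
qed

lemma exists_unit_direction:
  assumes "inner w v = 0"
  shows "\<exists>x::real^3. norm x = 1 \<and> inner w x = 0 \<and> v = norm v *\<^sub>R x"
proof (cases "v = 0")
  case True
  then show ?thesis using exists_unit_orthogonal[of w] by auto
next
  case False
  then show ?thesis using assms by (intro exI[of _ "(1 / norm v) *\<^sub>R v"]) simp
qed

lemma exists_max_stretch_orthogonal_to:
  fixes A :: "real^3^3"
  obtains y where "norm y = 1" "inner w y = 0"
    and "\<And>z. inner w z = 0 \<Longrightarrow> norm (A *v z) \<le> norm (A *v y) * norm z"
proof -
  define S where "S = sphere (0::real^3) 1 \<inter> {y. inner w y = 0}"
  have "compact S"
    unfolding S_def by (intro compact_Int_closed compact_sphere closed_hyperplane)
  moreover have "S \<noteq> {}"
    using exists_unit_orthogonal[of w] by (auto simp: S_def)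
  moreover have "continuous_on S (\<lambda>y. norm (A *v y))"
    by (intro continuous_intros)
  ultimately obtain y where "y \<in> S" and max: "\<forall>z\<in>S. norm (A *v z) \<le> norm (A *v y)"
    using continuous_attains_sup by blast
  show thesis
  proof (rule that)
    show "norm y = 1" "inner w y = 0"
      using \<open>y \<in> S\<close> by (auto simp: S_def)
    show "norm (A *v z) \<le> norm (A *v y) * norm z" if "inner w z = 0" for z
      by (rule norm_le_if_norm_le_on_unit_vectors[where P="\<lambda>z. inner w z = 0"])
        (use max that in \<open>auto simp: S_def\<close>)
  qed
qed

lemma principal_axes3:
  fixes A :: "real^3^3"
  obtains y1 y2 y3 where "orthonormal3 y1 y2 y3"
    and "inner (A *v y1) (A *v y2) = 0" "inner (A *v y1) (A *v y3) = 0" "inner (A *v y2) (A *v y3) = 0"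
    and "norm (A *v y2) \<le> norm (A *v y1)" "norm (A *v y3) \<le> norm (A *v y2)"
proof -
  obtain y1 where y1: "norm y1 = 1" and max1: "\<And>z. norm (A *v z) \<le> norm (A *v y1) * norm z"
    using exists_max_stretch_orthogonal_to[of 0 A] by auto
  obtain y2 where y2: "norm y2 = 1" "inner y1 y2 = 0"
    and max2: "\<And>z. inner y1 z = 0 \<Longrightarrow> norm (A *v z) \<le> norm (A *v y2) * norm z"
    using exists_max_stretch_orthogonal_to[of y1 A] by blast
  define y3 where "y3 = y1 \<times> y2"
  have y: "orthonormal3 y1 y2 y3"
    unfolding y3_def using y1 y2 by (rule orthonormal3_cross)
  then have y13: "inner y1 y3 = 0" and y23: "inner y2 y3 = 0" and "norm y3 = 1"
    by (auto simp: orthonormal3_def)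
  have perp1: "inner (A *v y1) (A *v z) = 0" if "inner y1 z = 0" for z
    using y1 that by (rule maximal_stretch_orthogonal) (rule max1)
  have "inner (A *v y2) (A *v y3) = 0"
    using y2(1) y23 by (rule maximal_stretch_orthogonal)
      (rule max2, simp add: inner_add_right y2(2) y13)
  moreover have "norm (A *v y2) \<le> norm (A *v y1)"
    using max1[of y2] y2 by simp
  moreover have "norm (A *v y3) \<le> norm (A *v y2)"
    using max2[OF y13] \<open>norm y3 = 1\<close> by simp
  ultimately show thesis
    using that y perp1[OF y2(2)] perp1[OF y13] by blast
qed

lemma matrix_eq_orthonormal3_images:
  assumes x: "orthonormal3 x1 x2 x3" and y: "orthonormal3 y1 y2 y3"
    and Ay: "A *v y1 = s$1 *\<^sub>R x1" "A *v y2 = s$2 *\<^sub>R x2" "A *v y3 = s$3 *\<^sub>R x3"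
  shows "A = transpose (vector [x1, x2, x3]) ** diag3 s ** (vector [y1, y2, y3] :: real^3^3)"
proof -
  define U where "U = transpose (vector [x1, x2, x3] :: real^3^3)"
  define V where "V = (vector [y1, y2, y3] :: real^3^3)"
  have "(A ** transpose V) $ i $ l = (U ** diag3 s) $ i $ l" for i l
  proof -
    have "(A ** transpose V) $ i $ l = (A *v (V $ l)) $ i"
      by (simp add: matrix_matrix_mult_def matrix_vector_mult_def transpose_def)
    moreover have "(U ** diag3 s) $ i $ l = U $ i $ l * s $ l"
      using exhaust_3[of l] by (auto simp: matrix_matrix_mult_def diag3_def sum_3)
    ultimately show ?thesis
      using exhaust_3[of l] Ay by (auto simp: U_def V_def transpose_def mult.commute)
  qed
  then have "A ** transpose V = U ** diag3 s"
    by (simp add: vec_eq_iff)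
  moreover have "orthogonal_matrix V"
    unfolding V_def using y by (rule orthogonal_matrix_orthonormal3_rows)
  ultimately show ?thesis
    unfolding U_def V_def[symmetric] by (metis matrix_mul_assoc matrix_mul_rid orthogonal_matrix_def)
qed

lemma svd3:
  fixes A :: "real^3^3"
  obtains U V s where "orthogonal_matrix U" "orthogonal_matrix V" "A = U ** diag3 s ** V"
    and "s$2 \<le> s$1" "\<bar>s$3\<bar> \<le> s$2"
proof -
  obtain y1 y2 y3 where y: "orthonormal3 y1 y2 y3"
    and A12: "inner (A *v y1) (A *v y2) = 0" and A13: "inner (A *v y1) (A *v y3) = 0"
    and A23: "inner (A *v y2) (A *v y3) = 0"
    and le21: "norm (A *v y2) \<le> norm (A *v y1)" and le32: "norm (A *v y3) \<le> norm (A *v y2)"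
    by (rule principal_axes3)
  have perp_direction: "inner x (A *v z) = 0"
    if "inner (A *v y) (A *v z) = 0" "A *v y = norm (A *v y) *\<^sub>R x" "norm (A *v z) \<le> norm (A *v y)"
    for x y z
  proof (cases "A *v y = 0")
    case False
    have "inner (A *v y) (A *v z) = norm (A *v y) * inner x (A *v z)"
      using arg_cong[OF that(2), of "\<lambda>u. inner u (A *v z)"] by simp
    then show ?thesis using that(1) False by simp
  qed (use that(3) in simp)
  obtain x1 where x1: "norm x1 = 1" "A *v y1 = norm (A *v y1) *\<^sub>R x1"
    using exists_unit_direction[of 0 "A *v y1"] by auto
  have "inner x1 (A *v y2) = 0"
    using A12 x1(2) le21 by (rule perp_direction)
  then obtain x2 where x2: "norm x2 = 1" "inner x1 x2 = 0" "A *v y2 = norm (A *v y2) *\<^sub>R x2"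
    using exists_unit_direction by blast
  define x3 where "x3 = x1 \<times> x2"
  have x: "orthonormal3 x1 x2 x3"
    unfolding x3_def using x1(1) x2(1,2) by (rule orthonormal3_cross)
  have "inner x1 (A *v y3) = 0"
    using A13 x1(2) order_trans[OF le32 le21] by (rule perp_direction)
  moreover have "inner x2 (A *v y3) = 0"
    using A23 x2(3) le32 by (rule perp_direction)
  ultimately have x3: "A *v y3 = inner x3 (A *v y3) *\<^sub>R x3"
    using orthonormal3_expansion[OF x, of "A *v y3"] by simp
  define s where "s = (vector [norm (A *v y1), norm (A *v y2), inner x3 (A *v y3)] :: real^3)"
  have "A *v y1 = s$1 *\<^sub>R x1" "A *v y2 = s$2 *\<^sub>R x2" "A *v y3 = s$3 *\<^sub>R x3"
    unfolding s_def vector_3 by (fact x1(2), fact x2(3), fact x3)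
  then have A: "A = transpose (vector [x1, x2, x3]) ** diag3 s ** (vector [y1, y2, y3] :: real^3^3)"
    by (rule matrix_eq_orthonormal3_images[OF x y])
  have "\<bar>inner x3 (A *v y3)\<bar> \<le> norm (A *v y2)"
    using Cauchy_Schwarz_ineq2[of x3 "A *v y3"] x le32 by (simp add: orthonormal3_def)
  then have "s$2 \<le> s$1" "\<bar>s$3\<bar> \<le> s$2"
    using le21 by (simp_all add: s_def)
  moreover have "orthogonal_matrix (transpose (vector [x1, x2, x3] :: real^3^3))"
    using orthogonal_matrix_orthonormal3_rows[OF x] by simp
  ultimately show thesis
    using orthogonal_matrix_orthonormal3_rows[OF y] A that by blast
qed

section \<open>CHSH matrices\<close>

(* On real^3^3, norm and inner are the Frobenius norm and inner product. *)
definition chsh_matrices :: "(real^3^3) set" where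
  "chsh_matrices = {M. det M = 0 \<and> norm M = 2}"

definition chsh_matrix :: "real^3 \<Rightarrow> real^3 \<Rightarrow> real^3 \<Rightarrow> real^3 \<Rightarrow> real^3^3" where
  "chsh_matrix a a' b b' = (\<chi> j k. a$j * (b$k + b'$k) + a'$j * (b$k - b'$k))"

lemma chsh_matrices_orthogonal_sandwich:
  assumes "orthogonal_matrix U" "orthogonal_matrix V"
  shows "U ** X ** V \<in> chsh_matrices \<longleftrightarrow> X \<in> chsh_matrices"
  using det_orthogonal_sandwich_eq_0[OF assms] norm_orthogonal_sandwich[OF assms]
  by (simp add: chsh_matrices_def)

lemma diag3_in_chsh_matrices_iff:
  "diag3 s \<in> chsh_matrices \<longleftrightarrow> s$1 * s$2 * s$3 = 0 \<and> (s$1)\<^sup>2 + (s$2)\<^sup>2 + (s$3)\<^sup>2 = 4"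
  by (simp add: chsh_matrices_def det_diag3 norm_eq_square inner_diag3 power2_eq_square)

lemma svd_of_chsh_matrix:
  assumes "U ** diag3 s ** V \<in> chsh_matrices" "orthogonal_matrix U" "orthogonal_matrix V"
    and "s$2 \<le> s$1" "\<bar>s$3\<bar> \<le> s$2"
  shows "s$3 = 0" "(s$1)\<^sup>2 + (s$2)\<^sup>2 = 4" "s$1 > 0"
proof -
  have "s$1 * s$2 * s$3 = 0" and sq: "(s$1)\<^sup>2 + (s$2)\<^sup>2 + (s$3)\<^sup>2 = 4"
    using assms(1) chsh_matrices_orthogonal_sandwich[OF assms(2,3)] diag3_in_chsh_matrices_iff by auto
  then show "s$3 = 0"
    using assms(4,5) by (auto simp: mult_eq_0_iff)
  with sq show "(s$1)\<^sup>2 + (s$2)\<^sup>2 = 4" by simp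
  show "s$1 > 0"
  proof (rule ccontr)
    assume "\<not> s$1 > 0"
    then have "s$1 = 0" "s$2 = 0"
      using assms(4,5) by auto
    with \<open>(s$1)\<^sup>2 + (s$2)\<^sup>2 = 4\<close> show False by simp
  qed
qed

lemma two_entry_in_chsh_matrices:
  assumes "p \<noteq> p'" "q \<noteq> q'" "\<alpha>\<^sup>2 + \<beta>\<^sup>2 = 4"
  shows "axis p (axis q \<alpha>) + axis p' (axis q' \<beta>) \<in> chsh_matrices"
proof -
  obtain r :: 3 where "r \<noteq> p" "r \<noteq> p'"
    using exists_third_index by blast
  then have "row r (axis p (axis q \<alpha>) + axis p' (axis q' \<beta>)) = 0"
    by (simp add: row_def axis_def vec_eq_iff)
  then have "det (axis p (axis q \<alpha>) + axis p' (axis q' \<beta>)) = 0"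
    by (rule det_zero_row)
  moreover have "inner (axis p (axis q \<alpha>) + axis p' (axis q' \<beta>)) (axis p (axis q \<alpha>) + axis p' (axis q' \<beta>)) = 4"
    using assms by (simp add: inner_add_left inner_add_right inner_axis_axis power2_eq_square)
  ultimately show ?thesis
    by (simp add: chsh_matrices_def norm_eq_square)
qed

lemma normalised_two_entry_in_chsh_matrices:
  assumes "p \<noteq> p'" "q \<noteq> q'" "r = sqrt (\<alpha>\<^sup>2 + \<beta>\<^sup>2)" "r > 0"
  shows "axis p (axis q (2 * \<alpha> / r)) + axis p' (axis q' (2 * \<beta> / r)) \<in> chsh_matrices"
proof -
  have r2: "r\<^sup>2 = \<alpha>\<^sup>2 + \<beta>\<^sup>2"
    using assms(3) by simp
  have "(2 * \<alpha> / r)\<^sup>2 + (2 * \<beta> / r)\<^sup>2 = 4 * (\<alpha>\<^sup>2 + \<beta>\<^sup>2) / r\<^sup>2"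
    by (simp add: power_divide power_mult_distrib add_divide_distrib)
  also have "\<dots> = 4"
    using assms(4) by (simp flip: r2)
  finally show ?thesis
    using assms(1,2) by (intro two_entry_in_chsh_matrices)
qed

lemma chsh_matrix_in_chsh_matrices:
  assumes "norm a = 1" "norm a' = 1" "norm b = 1" "norm b' = 1"
  shows "chsh_matrix a a' b b' \<in> chsh_matrices"
proof -
  have "det (chsh_matrix a a' b b') = 0"
    by (simp add: det_3 chsh_matrix_def algebra_simps)
  have unit: "inner a a = 1" "inner a' a' = 1" "inner b b = 1" "inner b' b' = 1"
    using assms by (simp_all add: norm_eq_1)
  have "inner (chsh_matrix a a' b b') (chsh_matrix a a' b b') =
     inner a a * inner (b + b') (b + b') + inner a' a' * inner (b - b') (b - b')
       + 2 * inner a a' * inner (b + b') (b - b')"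
    by (simp add: inner_vec_def chsh_matrix_def sum_3 algebra_simps power2_eq_square)
  also have "\<dots> = 4"
    using unit by (simp add: inner_add_left inner_add_right inner_diff_left inner_diff_right inner_commute)
  finally show ?thesis
    using \<open>det (chsh_matrix a a' b b') = 0\<close> by (simp add: chsh_matrices_def norm_eq_square)
qed

lemma chsh_matrices_obtain:
  assumes "M \<in> chsh_matrices"
  obtains a a' b b' where "norm a = 1" "norm a' = 1" "norm b = 1" "norm b' = 1"
    and "M = chsh_matrix a a' b b'"
proof -
  obtain U V s where oU: "orthogonal_matrix U" and oV: "orthogonal_matrix V"
    and M: "M = U ** diag3 s ** V" and s: "s$2 \<le> s$1" "\<bar>s$3\<bar> \<le> s$2"
    by (rule svd3)
  have s3: "s$3 = 0" and sq: "(s$1)\<^sup>2 + (s$2)\<^sup>2 = 4"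
    using svd_of_chsh_matrix[OF assms[unfolded M] oU oV s] by auto
  define u where "u = s$1 *\<^sub>R row 1 V"
  define w where "w = s$2 *\<^sub>R row 2 V"
  define b where "b = (1/2) *\<^sub>R (u + w)"
  define b' where "b' = (1/2) *\<^sub>R (u - w)"
  have "norm (column 1 U) = 1" "norm (column 2 U) = 1"
    using oU unfolding orthogonal_matrix_orthonormal_columns by auto
  moreover have "norm (row 1 V) = 1" "norm (row 2 V) = 1" "inner (row 1 V) (row 2 V) = 0"
    using oV unfolding orthogonal_matrix_orthonormal_rows orthogonal_def by auto
  then have "inner u u = (s$1)\<^sup>2" "inner w w = (s$2)\<^sup>2" "inner u w = 0"
    by (simp_all add: u_def w_def norm_eq_1 power2_eq_square)
  then have "inner b b = 1" "inner b' b' = 1"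
    using sq by (simp_all add: b_def b'_def inner_add_left inner_add_right inner_diff_left
        inner_diff_right inner_commute algebra_simps)
  then have "norm b = 1" "norm b' = 1"
    by (simp_all add: norm_eq_1)
  moreover have "M = chsh_matrix (column 1 U) (column 2 U) b b'"
    using s3 unfolding M
    by (simp add: vec_eq_iff matrix_matrix_mult_def diag3_def sum_3 chsh_matrix_def b_def b'_def
        u_def w_def column_def row_def algebra_simps)
  ultimately show thesis
    by (rule that)
qed

section \<open>CHSH operators and their correlation matrices\<close>

lemma sum_swap_pairs:
  "(\<Sum>a\<in>A. \<Sum>b\<in>B. \<Sum>c\<in>C. \<Sum>d\<in>D. f a b c d) = (\<Sum>c\<in>C. \<Sum>d\<in>D. \<Sum>a\<in>A. \<Sum>b\<in>B. f a b c d)"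
proof -
  have "(\<Sum>a\<in>A. \<Sum>b\<in>B. \<Sum>c\<in>C. \<Sum>d\<in>D. f a b c d) = (\<Sum>a\<in>A. \<Sum>c\<in>C. \<Sum>d\<in>D. \<Sum>b\<in>B. f a b c d)"
    by (intro sum.cong refl) (simp add: sum.swap[of _ B] sum.swap[of _ B D])
  also have "\<dots> = (\<Sum>c\<in>C. \<Sum>d\<in>D. \<Sum>a\<in>A. \<Sum>b\<in>B. f a b c d)"
    by (simp add: sum.swap[of _ A])
  finally show ?thesis .
qed

lemma pauli_dot_add: "pauli_dot b + pauli_dot b' = pauli_dot (b + b')"
  by (simp add: pauli_dot_def vec_eq_iff sum.distrib[symmetric] algebra_simps)

lemma pauli_dot_diff: "pauli_dot b - pauli_dot b' = pauli_dot (b - b')"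
  by (simp add: pauli_dot_def vec_eq_iff sum_subtractf[symmetric] algebra_simps)

lemma Re_trace_kron_pauli_dot:
  "Re (trace (\<rho> ** kron (pauli_dot x) (pauli_dot y))) =
    (\<Sum>j\<in>UNIV. \<Sum>k\<in>UNIV. x$j * y$k * correlation \<rho> $ j $ k)"
proof -
  have "trace (\<rho> ** kron (pauli_dot x) (pauli_dot y)) =
     (\<Sum>j\<in>UNIV. \<Sum>k\<in>UNIV. of_real (x$j * y$k) * trace (\<rho> ** kron (pauli j) (pauli k)))"
    unfolding trace_def matrix_matrix_mult_def kron_def pauli_dot_def
    apply (simp add: sum_product sum_distrib_left sum_distrib_right mult_ac)
    apply (subst sum_swap_pairs)
    apply (subst sum.swap[where B="UNIV::3 set"])
    apply (subst sum.swap[where B="UNIV::(2\<times>2) set"])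
    apply (subst sum.swap[where B="UNIV::(2\<times>2) set"])
    apply (simp add: mult_ac)
    done
  then show ?thesis
    by (simp add: correlation_def Re_sum)
qed

lemma chsh_expect_eq_inner:
  "chsh_expect \<rho> (kron (pauli_dot a) (pauli_dot b + pauli_dot b') + kron (pauli_dot a') (pauli_dot b - pauli_dot b'))
     = inner (correlation \<rho>) (chsh_matrix a a' b b')"
  unfolding chsh_expect_def pauli_dot_add pauli_dot_diff matrix_add_ldistrib trace_add plus_complex.sel
    Re_trace_kron_pauli_dot
  by (simp add: inner_vec_def chsh_matrix_def sum_3 algebra_simps)

lemma chsh_expect_image:
  "chsh_expect \<rho> ` chsh_ops = inner (correlation \<rho>) ` chsh_matrices"
proof
  show "chsh_expect \<rho> ` chsh_ops \<subseteq> inner (correlation \<rho>) ` chsh_matrices"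
    unfolding chsh_ops_def using chsh_matrix_in_chsh_matrices chsh_expect_eq_inner by fastforce
  show "inner (correlation \<rho>) ` chsh_matrices \<subseteq> chsh_expect \<rho> ` chsh_ops"
  proof
    fix x assume "x \<in> inner (correlation \<rho>) ` chsh_matrices"
    then obtain M where "M \<in> chsh_matrices" "x = inner (correlation \<rho>) M" by blast
    then obtain a a' b b' where "norm a = 1" "norm a' = 1" "norm b = 1" "norm b' = 1"
      and x: "x = inner (correlation \<rho>) (chsh_matrix a a' b b')"
      by (metis chsh_matrices_obtain)
    then have "kron (pauli_dot a) (pauli_dot b + pauli_dot b') + kron (pauli_dot a') (pauli_dot b - pauli_dot b')
        \<in> chsh_ops"
      unfolding chsh_ops_def by blast
    then show "x \<in> chsh_expect \<rho> ` chsh_ops"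
      by (rule rev_image_eqI) (simp add: x chsh_expect_eq_inner)
  qed
qed

definition optimal_chsh_matrix :: "real^3^3 \<Rightarrow> real^3^3 \<Rightarrow> bool" where
  "optimal_chsh_matrix T M \<longleftrightarrow> M \<in> chsh_matrices \<and> (\<forall>M'\<in>chsh_matrices. inner T M' \<le> inner T M)"

lemma bdd_above_inner_chsh_matrices: "bdd_above (inner T ` chsh_matrices)"
proof (rule bdd_aboveI)
  fix x assume "x \<in> inner T ` chsh_matrices"
  then obtain M where "M \<in> chsh_matrices" "x = inner T M" by blast
  then show "x \<le> norm T * 2"
    using norm_cauchy_schwarz[of T M] by (simp add: chsh_matrices_def)
qed

lemma optimal_chsh_iff:
  assumes "norm a = 1" "norm a' = 1" "norm b = 1" "norm b' = 1"
  shows "optimal_chsh \<rho> (kron (pauli_dot a) (pauli_dot b + pauli_dot b') + kron (pauli_dot a') (pauli_dot b - pauli_dot b'))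
    \<longleftrightarrow> optimal_chsh_matrix (correlation \<rho>) (chsh_matrix a a' b b')"
proof -
  let ?T = "correlation \<rho>" and ?M = "chsh_matrix a a' b b'"
  have M: "?M \<in> chsh_matrices"
    using assms by (rule chsh_matrix_in_chsh_matrices)
  have S: "kron (pauli_dot a) (pauli_dot b + pauli_dot b') + kron (pauli_dot a') (pauli_dot b - pauli_dot b')
      \<in> chsh_ops"
    unfolding chsh_ops_def using assms by blast
  have "inner ?T ?M = Sup (inner ?T ` chsh_matrices) \<longleftrightarrow> (\<forall>M'\<in>chsh_matrices. inner ?T M' \<le> inner ?T ?M)"
  proof
    assume "inner ?T ?M = Sup (inner ?T ` chsh_matrices)"
    then show "\<forall>M'\<in>chsh_matrices. inner ?T M' \<le> inner ?T ?M"
      by (simp add: cSup_upper bdd_above_inner_chsh_matrices)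
  next
    assume "\<forall>M'\<in>chsh_matrices. inner ?T M' \<le> inner ?T ?M"
    then show "inner ?T ?M = Sup (inner ?T ` chsh_matrices)"
      using M by (intro cSup_eq_maximum[symmetric]) auto
  qed
  then show ?thesis
    using M S by (simp add: optimal_chsh_def optimal_chsh_matrix_def chsh_expect_eq_inner
        nonlocality_def chsh_expect_image)
qed

lemma common_optimal_chsh_iff:
  "(\<exists>S. optimal_chsh \<rho> S \<and> optimal_chsh \<rho>' S) \<longleftrightarrow>
    (\<exists>M. optimal_chsh_matrix (correlation \<rho>) M \<and> optimal_chsh_matrix (correlation \<rho>') M)"
proof
  assume "\<exists>S. optimal_chsh \<rho> S \<and> optimal_chsh \<rho>' S"
  then obtain S where S: "optimal_chsh \<rho> S" "optimal_chsh \<rho>' S" by blast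
  then obtain a a' b b' where "norm a = 1" "norm a' = 1" "norm b = 1" "norm b' = 1"
    and "S = kron (pauli_dot a) (pauli_dot b + pauli_dot b') + kron (pauli_dot a') (pauli_dot b - pauli_dot b')"
    by (auto simp: optimal_chsh_def chsh_ops_def)
  with S show "\<exists>M. optimal_chsh_matrix (correlation \<rho>) M \<and> optimal_chsh_matrix (correlation \<rho>') M"
    using optimal_chsh_iff by blast
next
  assume "\<exists>M. optimal_chsh_matrix (correlation \<rho>) M \<and> optimal_chsh_matrix (correlation \<rho>') M"
  then obtain M where M: "optimal_chsh_matrix (correlation \<rho>) M" "optimal_chsh_matrix (correlation \<rho>') M"
    by blast
  then obtain a a' b b' where "norm a = 1" "norm a' = 1" "norm b = 1" "norm b' = 1"
    and "M = chsh_matrix a a' b b'"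
    by (meson chsh_matrices_obtain optimal_chsh_matrix_def)
  with M show "\<exists>S. optimal_chsh \<rho> S \<and> optimal_chsh \<rho>' S"
    using optimal_chsh_iff by blast
qed

section \<open>Maximisers of the CHSH functional\<close>

lemma optimal_chsh_matrix_orthogonal_sandwich:
  assumes "orthogonal_matrix U" "orthogonal_matrix V"
  shows "optimal_chsh_matrix (U ** T ** V) (U ** M ** V) \<longleftrightarrow> optimal_chsh_matrix T M"
proof -
  have oT: "orthogonal_matrix (transpose U)" "orthogonal_matrix (transpose V)"
    using assms by simp_all
  have "(\<forall>M'\<in>chsh_matrices. inner (U ** T ** V) M' \<le> inner (U ** T ** V) (U ** M ** V))
      \<longleftrightarrow> (\<forall>M'\<in>chsh_matrices. inner T M' \<le> inner T M)"
  proof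
    assume le: "\<forall>M'\<in>chsh_matrices. inner (U ** T ** V) M' \<le> inner (U ** T ** V) (U ** M ** V)"
    show "\<forall>M'\<in>chsh_matrices. inner T M' \<le> inner T M"
    proof
      fix M' assume "M' \<in> chsh_matrices"
      then have "U ** M' ** V \<in> chsh_matrices"
        using chsh_matrices_orthogonal_sandwich[OF assms] by simp
      from le[rule_format, OF this] show "inner T M' \<le> inner T M"
        by (simp add: inner_orthogonal_sandwich[OF assms])
    qed
  next
    assume le: "\<forall>M'\<in>chsh_matrices. inner T M' \<le> inner T M"
    show "\<forall>M'\<in>chsh_matrices. inner (U ** T ** V) M' \<le> inner (U ** T ** V) (U ** M ** V)"
    proof
      fix M' assume "M' \<in> chsh_matrices"
      then have "transpose U ** M' ** transpose V \<in> chsh_matrices"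
        using chsh_matrices_orthogonal_sandwich[OF oT] by simp
      from le[rule_format, OF this]
      show "inner (U ** T ** V) M' \<le> inner (U ** T ** V) (U ** M ** V)"
        by (simp add: inner_matrix_sandwich orthogonal_sandwich_cancel[OF assms])
    qed
  qed
  then show ?thesis
    using chsh_matrices_orthogonal_sandwich[OF assms] by (simp add: optimal_chsh_matrix_def)
qed

lemma optimal_chsh_matrix_singular_competitor:
  assumes opt: "optimal_chsh_matrix T M" and "det Y = 0"
  shows "2 * inner T Y \<le> inner T M * norm Y"
proof (cases "Y = 0")
  case False
  then have "(2 / norm Y) *\<^sub>R Y \<in> chsh_matrices"
    using assms(2) by (simp add: chsh_matrices_def det_scaleR_3)
  moreover have "inner T X \<le> inner T M" if "X \<in> chsh_matrices" for X
    using opt that by (simp add: optimal_chsh_matrix_def)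
  ultimately have "2 / norm Y * inner T Y \<le> inner T M"
    by fastforce
  then show ?thesis
    using False by (simp add: field_simps)
qed simp

lemma optimal_chsh_matrix_first_order:
  assumes opt: "optimal_chsh_matrix T M" and pos: "inner T M > 0"
    and singular: "\<And>t. det (M + t *\<^sub>R X) = 0"
  shows "inner T X = inner T M / 4 * inner M X"
proof -
  (* Squaring the competitor inequality for M + t X gives a quadratic inequality in t that can
     only hold near t = 0 if its linear coefficient vanishes. *)
  define v where "v = inner T M"
  define p where "p = inner T X"
  define q where "q = inner M X"
  define r where "r = inner X X"
  have MM: "inner M M = 4"
    using opt by (simp add: optimal_chsh_matrix_def chsh_matrices_def norm_eq_square)
  have competitor: "2 * (v + t * p) \<le> v * norm (M + t *\<^sub>R X)" for t
    using optimal_chsh_matrix_singular_competitor[OF opt singular[of t]]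
    by (simp add: v_def p_def inner_add_right)
  define \<delta> where "\<delta> = v / (\<bar>p\<bar> + 1)"
  have "\<delta> > 0" using pos by (simp add: \<delta>_def v_def)
  moreover have "t * (8 * v * p - 2 * v\<^sup>2 * q) + t\<^sup>2 * (4 * p\<^sup>2 - v\<^sup>2 * r) \<le> 0" if "\<bar>t\<bar> < \<delta>" for t
  proof -
    have "\<bar>t * p\<bar> \<le> \<delta> * \<bar>p\<bar>"
      using that by (simp add: abs_mult mult_right_mono)
    also have "\<dots> < v"
      using pos by (simp add: \<delta>_def v_def field_simps)
    finally have "0 \<le> 2 * (v + t * p)" by (simp add: abs_less_iff)
    then have "(2 * (v + t * p))\<^sup>2 \<le> (v * norm (M + t *\<^sub>R X))\<^sup>2"
      by (intro power_mono competitor)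
    moreover have "(norm (M + t *\<^sub>R X))\<^sup>2 = 4 + 2 * t * q + t\<^sup>2 * r"
      unfolding power2_norm_eq_inner using MM
      by (simp add: q_def r_def inner_add_left inner_add_right inner_commute power2_eq_square algebra_simps)
    ultimately show ?thesis
      by (simp add: power_mult_distrib power2_eq_square algebra_simps)
  qed
  ultimately have "8 * v * p - 2 * v\<^sup>2 * q = 0"
    by (rule linear_coeff_eq_0_if_nonpos_near_0)
  then show ?thesis
    using pos by (simp add: p_def q_def v_def power2_eq_square algebra_simps)
qed

lemma two_entries_le_optimal:
  assumes opt: "optimal_chsh_matrix T M" and "p \<noteq> p'" "q \<noteq> q'"
  shows "2 * sqrt ((T$p$q)\<^sup>2 + (T$p'$q')\<^sup>2) \<le> inner T M"
proof -
  define r where "r = sqrt ((T$p$q)\<^sup>2 + (T$p'$q')\<^sup>2)"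
  have max: "inner T X \<le> inner T M" if "X \<in> chsh_matrices" for X
    using opt that by (simp add: optimal_chsh_matrix_def)
  show ?thesis
  proof (cases "r = 0")
    case True
    then have "T$p$q = 0" by (simp add: r_def)
    moreover have "axis p (axis q 2) + axis p' (axis q' 0) \<in> chsh_matrices"
      using assms(2,3) by (intro two_entry_in_chsh_matrices) simp_all
    ultimately show ?thesis
      using max True by (force simp: r_def inner_add_right inner_axis_axis_matrix)
  next
    case False
    moreover have "r \<ge> 0" by (simp add: r_def)
    ultimately have "r > 0" by simp
    have r2: "r\<^sup>2 = (T$p$q)\<^sup>2 + (T$p'$q')\<^sup>2" by (simp add: r_def)
    have "axis p (axis q (2 * T$p$q / r)) + axis p' (axis q' (2 * T$p'$q' / r)) \<in> chsh_matrices"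
      using assms(2,3) r_def \<open>r > 0\<close> by (intro normalised_two_entry_in_chsh_matrices)
    moreover have "inner T (axis p (axis q (2 * T$p$q / r)) + axis p' (axis q' (2 * T$p'$q' / r))) = 2 * r"
      using \<open>r > 0\<close> r2 by (simp add: inner_add_right inner_axis_axis_matrix power2_eq_square field_simps)
    ultimately show ?thesis
      using max by (fastforce simp: r_def)
  qed
qed

lemma optimal_chsh_matrix_nonpos_imp_zero:
  assumes opt: "optimal_chsh_matrix T M" and "inner T M \<le> 0"
  shows "T = 0"
proof -
  have "T$p$q = 0" for p q
  proof -
    obtain p' q' :: 3 where "p \<noteq> p'" "q \<noteq> q'"
      using exists_third_index by metis
    then have "2 * sqrt ((T$p$q)\<^sup>2 + (T$p'$q')\<^sup>2) \<le> 0"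
      using two_entries_le_optimal[OF opt, of p p' q q'] assms(2) by linarith
    then show ?thesis
      by (simp add: sum_power2_le_zero_iff)
  qed
  then show ?thesis
    by (simp add: vec_eq_iff)
qed

lemma optimal_diag3_stationary:
  assumes opt: "optimal_chsh_matrix T (diag3 s)" and pos: "inner T (diag3 s) > 0"
  shows "T$p$q * s$q = inner T (diag3 s) / 4 * diag3 s $ p $ q * s$q"
    and "s$p * T$p$q = inner T (diag3 s) / 4 * s$p * diag3 s $ p $ q"
proof -
  have det0: "det (diag3 s) = 0"
    using opt by (simp add: optimal_chsh_matrix_def chsh_matrices_def)
  have det_q: "det (diag3 s + t *\<^sub>R axis p (axis q (s$q))) = 0" for t
  proof -
    have "diag3 s + t *\<^sub>R axis p (axis q (s$q)) = (mat 1 + t *\<^sub>R axis p (axis q 1)) ** diag3 s"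
      by (simp add: matrix_add_rdistrib axis_axis_mult_diag3 flip: scalar_matrix_assoc)
    then show ?thesis using det0 by (simp add: det_mul)
  qed
  have det_p: "det (diag3 s + t *\<^sub>R axis p (axis q (s$p))) = 0" for t
  proof -
    have "diag3 s + t *\<^sub>R axis p (axis q (s$p)) = diag3 s ** (mat 1 + t *\<^sub>R axis p (axis q 1))"
      by (simp add: matrix_add_ldistrib diag3_mult_axis_axis matrix_scalar_ac flip: scalar_matrix_assoc)
    then show ?thesis using det0 by (simp add: det_mul)
  qed
  show "T$p$q * s$q = inner T (diag3 s) / 4 * diag3 s $ p $ q * s$q"
    using optimal_chsh_matrix_first_order[OF opt pos det_q]
    by (simp add: inner_axis_axis_matrix)
  show "s$p * T$p$q = inner T (diag3 s) / 4 * s$p * diag3 s $ p $ q"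
    using optimal_chsh_matrix_first_order[OF opt pos det_p]
    by (simp add: inner_axis_axis_matrix mult_ac)
qed

lemma optimal_diag3_lower_block_bound:
  assumes opt: "optimal_chsh_matrix T (diag3 s)"
    and T11: "T$1$1 = inner T (diag3 s) / 4 * s$1" and sq: "(s$1)\<^sup>2 + (s$2)\<^sup>2 = 4"
    and "p \<noteq> 1" "q \<noteq> 1"
  shows "(T$p$q)\<^sup>2 \<le> (inner T (diag3 s) / 4 * s$2)\<^sup>2"
proof -
  define v where "v = inner T (diag3 s)"
  have "sqrt ((T$1$1)\<^sup>2 + (T$p$q)\<^sup>2) \<le> v / 2"
    using two_entries_le_optimal[OF opt, of 1 p 1 q] assms(4,5) by (simp add: v_def)
  then have le: "(T$1$1)\<^sup>2 + (T$p$q)\<^sup>2 \<le> (v / 2)\<^sup>2"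
    by (rule sqrt_le_D)
  have "(s$2)\<^sup>2 = 4 - (s$1)\<^sup>2"
    using sq by linarith
  then have "(v / 4 * s$2)\<^sup>2 = (v / 4)\<^sup>2 * (4 - (s$1)\<^sup>2)"
    by (simp only: power_mult_distrib)
  also have "\<dots> = (v / 2)\<^sup>2 - (T$1$1)\<^sup>2"
    by (simp add: T11 v_def power_mult_distrib power_divide field_simps)
  finally show ?thesis
    using le by (simp add: v_def)
qed

lemma optimal_diag3_structure:
  assumes opt: "optimal_chsh_matrix T (diag3 s)"
    and s: "s$3 = 0" "s$1 > 0" "s$2 \<ge> 0" "(s$1)\<^sup>2 + (s$2)\<^sup>2 = 4"
  obtains c \<tau> where "c \<ge> 0" "\<bar>\<tau>\<bar> \<le> c * s$2" "T = diag3 (vector [c * s$1, c * s$2, \<tau>])"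
proof -
  define v where "v = inner T (diag3 s)"
  show thesis
  proof (cases "v > 0")
    case False
    then have "T = 0"
      using opt by (intro optimal_chsh_matrix_nonpos_imp_zero) (auto simp: v_def)
    then have "T = diag3 (vector [0 * s$1, 0 * s$2, 0])"
      by (simp add: vec_eq_iff diag3_def forall_3)
    then show thesis
      by (rule that[rotated 2]) simp_all
  next
    case True
    note stationary = optimal_diag3_stationary[OF opt True[unfolded v_def], folded v_def]
    have row1: "T$1$q = (if q = 1 then v / 4 * s$1 else 0)" for q
      using stationary(2)[of 1 q] s(2) by (cases "q = 1") (simp_all add: diag3_def)
    have col1: "T$p$1 = (if p = 1 then v / 4 * s$1 else 0)" for p
      using stationary(1)[of p 1] s(2) by (cases "p = 1") (simp_all add: diag3_def)
    have block: "(T$p$q)\<^sup>2 \<le> (v / 4 * s$2)\<^sup>2" if "p \<noteq> 1" "q \<noteq> 1" for p q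
      using optimal_diag3_lower_block_bound[OF opt _ s(4) that] row1[of 1] by (simp add: v_def)
    have "T$2$2 = v / 4 * s$2 \<and> T$2$3 = 0 \<and> T$3$2 = 0"
    proof (cases "s$2 = 0")
      case True
      then show ?thesis
        using block[of 2 2] block[of 2 3] block[of 3 2] by simp
    next
      case False
      then show ?thesis
        using stationary(1)[of 2 2] stationary(2)[of 2 3] stationary(1)[of 3 2] by (simp add: diag3_def)
    qed
    moreover have "\<bar>T$3$3\<bar> \<le> v / 4 * s$2"
      using block[of 3 3] True s(3) by (simp add: abs_le_square_iff[symmetric])
    ultimately have "T = diag3 (vector [v / 4 * s$1, v / 4 * s$2, T$3$3])"
      using row1 col1 by (simp add: vec_eq_iff diag3_def forall_3)
    then show thesis
      using \<open>\<bar>T$3$3\<bar> \<le> v / 4 * s$2\<close> True by (intro that[of "v / 4"]) simp_all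
  qed
qed

lemma optimal_chsh_matrix_svd:
  assumes opt: "optimal_chsh_matrix T (W ** diag3 s ** Z)"
    and W: "orthogonal_matrix W" and Z: "orthogonal_matrix Z"
    and s: "s$2 \<le> s$1" "\<bar>s$3\<bar> \<le> s$2"
  obtains c \<tau> where "c \<ge> 0" "\<bar>\<tau>\<bar> \<le> c * s$2" "T = W ** diag3 (vector [c * s$1, c * s$2, \<tau>]) ** Z"
proof -
  define T' where "T' = transpose W ** T ** transpose Z"
  have T: "T = W ** T' ** Z"
    using orthogonal_sandwich_cancel(2)[OF W Z] by (simp add: T'_def)
  have "optimal_chsh_matrix (W ** T' ** Z) (W ** diag3 s ** Z)"
    using opt by (simp flip: T)
  then have "optimal_chsh_matrix T' (diag3 s)"
    by (simp add: optimal_chsh_matrix_orthogonal_sandwich[OF W Z])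
  moreover have "s$3 = 0" "s$1 > 0" and "s$2 \<ge> 0" and "(s$1)\<^sup>2 + (s$2)\<^sup>2 = 4"
    using svd_of_chsh_matrix[OF _ W Z s] opt s by (auto simp: optimal_chsh_matrix_def)
  ultimately obtain c \<tau> where "c \<ge> 0" "\<bar>\<tau>\<bar> \<le> c * s$2" "T' = diag3 (vector [c * s$1, c * s$2, \<tau>])"
    by (rule optimal_diag3_structure)
  with T show thesis
    by (intro that) simp_all
qed

section \<open>The maximum for a given singular value decomposition\<close>

lemma norm_diag3_mult_projection:
  assumes "norm n = 1"
  shows "(norm (diag3 d ** (mat 1 - (\<chi> a b. n$a * n$b))))\<^sup>2 =
    (\<Sum>l\<in>UNIV. (d$l)\<^sup>2) - (\<Sum>l\<in>UNIV. (d$l * n$l)\<^sup>2)"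
proof -
  have n: "(n$1)\<^sup>2 + (n$2)\<^sup>2 + (n$3)\<^sup>2 = 1"
    using assms by (simp add: norm_eq_1 inner_vec_def sum_3 power2_eq_square)
  have "(norm (diag3 d ** (mat 1 - (\<chi> a b. n$a * n$b))))\<^sup>2 =
     (d$1)\<^sup>2 * (1 - 2 * (n$1)\<^sup>2 + (n$1)\<^sup>2 * ((n$1)\<^sup>2 + (n$2)\<^sup>2 + (n$3)\<^sup>2)) +
     (d$2)\<^sup>2 * (1 - 2 * (n$2)\<^sup>2 + (n$2)\<^sup>2 * ((n$1)\<^sup>2 + (n$2)\<^sup>2 + (n$3)\<^sup>2)) +
     (d$3)\<^sup>2 * (1 - 2 * (n$3)\<^sup>2 + (n$3)\<^sup>2 * ((n$1)\<^sup>2 + (n$2)\<^sup>2 + (n$3)\<^sup>2))"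
    unfolding power2_norm_eq_inner
    by (simp add: inner_vec_def matrix_matrix_mult_def diag3_def mat_def sum_3 algebra_simps power2_eq_square)
  also have "\<dots> = (d$1)\<^sup>2 * (1 - (n$1)\<^sup>2) + (d$2)\<^sup>2 * (1 - (n$2)\<^sup>2) + (d$3)\<^sup>2 * (1 - (n$3)\<^sup>2)"
    unfolding n by (simp add: algebra_simps)
  also have "\<dots> = (\<Sum>l\<in>UNIV. (d$l)\<^sup>2) - (\<Sum>l\<in>UNIV. (d$l * n$l)\<^sup>2)"
    by (simp add: sum_3 power_mult_distrib algebra_simps)
  finally show ?thesis .
qed

lemma norm_diag3_mult_projection_le:
  assumes n: "norm n = 1" and ijk: "distinct [i, j, k]"
    and ord: "\<bar>d$i\<bar> \<ge> \<bar>d$j\<bar>" "\<bar>d$j\<bar> \<ge> \<bar>d$k\<bar>"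
  shows "norm (diag3 d ** (mat 1 - (\<chi> a b. n$a * n$b))) \<le> sqrt ((d$i)\<^sup>2 + (d$j)\<^sup>2)"
proof -
  (* The projection removes at least (d k)^2 from the squared norm. *)
  have "(\<Sum>l\<in>UNIV. (n$l)\<^sup>2) = 1"
    using n by (simp add: norm_eq_1 inner_vec_def power2_eq_square)
  then have "(d$k)\<^sup>2 = (\<Sum>l\<in>UNIV. (d$k)\<^sup>2 * (n$l)\<^sup>2)"
    by (simp flip: sum_distrib_left)
  also have "\<dots> \<le> (\<Sum>l\<in>UNIV. (d$l * n$l)\<^sup>2)"
  proof (rule sum_mono)
    fix l
    have "l = i \<or> l = j \<or> l = k"
      using UNIV_3_distinct[OF ijk] by blast
    then have "\<bar>d$k\<bar> \<le> \<bar>d$l\<bar>"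
      using ord by auto
    then show "(d$k)\<^sup>2 * (n$l)\<^sup>2 \<le> (d$l * n$l)\<^sup>2"
      by (simp add: abs_le_square_iff power_mult_distrib mult_right_mono)
  qed
  finally have "(norm (diag3 d ** (mat 1 - (\<chi> a b. n$a * n$b))))\<^sup>2 \<le> (d$i)\<^sup>2 + (d$j)\<^sup>2"
    using norm_diag3_mult_projection[OF n, of d] sum_3_distinct[OF ijk, of "\<lambda>l. (d$l)\<^sup>2"]
    by simp
  then show ?thesis
    by (simp add: real_le_rsqrt)
qed

lemma inner_diag3_le_leading:
  assumes M: "M \<in> chsh_matrices" and ijk: "distinct [i, j, k]"
    and ord: "\<bar>d$i\<bar> \<ge> \<bar>d$j\<bar>" "\<bar>d$j\<bar> \<ge> \<bar>d$k\<bar>"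
  shows "inner (diag3 d) M \<le> 2 * sqrt ((d$i)\<^sup>2 + (d$j)\<^sup>2)"
proof -
  obtain n where n: "norm n = 1" and Mn: "M *v n = 0"
    using M exists_unit_kernel_vector by (auto simp: chsh_matrices_def)
  define P :: "real^3^3" where "P = mat 1 - (\<chi> a b. n$a * n$b)"
  have "M ** (\<chi> a b. n$a * n$b) = (\<chi> a b. (M *v n)$a * n$b)"
    by (simp add: vec_eq_iff matrix_matrix_mult_def matrix_vector_mult_def sum_distrib_left mult_ac)
  then have "M ** P = M"
    using Mn by (simp add: P_def matrix_diff_ldistrib vec_eq_iff)
  moreover have "transpose P = P"
    by (simp add: P_def vec_eq_iff transpose_def mat_def mult.commute)
  ultimately have "inner (diag3 d) M = inner M (diag3 d ** P)"
    by (metis inner_commute inner_matrix_mult_right)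
  also have "\<dots> \<le> norm M * norm (diag3 d ** P)"
    by (rule norm_cauchy_schwarz)
  also have "\<dots> \<le> 2 * sqrt ((d$i)\<^sup>2 + (d$j)\<^sup>2)"
    using norm_diag3_mult_projection_le[OF n ijk ord] M by (simp add: P_def chsh_matrices_def)
  finally show ?thesis .
qed

lemma inner_svd_le_leading:
  assumes U: "orthogonal_matrix U" and V: "orthogonal_matrix V" and M: "M \<in> chsh_matrices"
    and "distinct [i, j, k]" "\<bar>d$i\<bar> \<ge> \<bar>d$j\<bar>" "\<bar>d$j\<bar> \<ge> \<bar>d$k\<bar>"
  shows "inner (U ** diag3 d ** V) M \<le> 2 * sqrt ((d$i)\<^sup>2 + (d$j)\<^sup>2)"
proof -
  have "transpose U ** M ** transpose V \<in> chsh_matrices"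
    using M U V chsh_matrices_orthogonal_sandwich[of "transpose U" "transpose V"] by simp
  then show ?thesis
    using inner_diag3_le_leading assms(4-6) by (simp add: inner_matrix_sandwich)
qed

lemma optimal_chsh_matrix_leading:
  assumes U: "orthogonal_matrix U" and V: "orthogonal_matrix V"
    and ijk: "distinct [i, j, k]" and ord: "\<bar>e$i\<bar> \<ge> \<bar>e$j\<bar>" "\<bar>e$j\<bar> \<ge> \<bar>e$k\<bar>"
    and r: "r = sqrt ((d$i)\<^sup>2 + (d$j)\<^sup>2)" "r > 0"
    and ratio: "e$i * r = d$i * sqrt ((e$i)\<^sup>2 + (e$j)\<^sup>2)" "e$j * r = d$j * sqrt ((e$i)\<^sup>2 + (e$j)\<^sup>2)"
  shows "optimal_chsh_matrix (U ** diag3 e ** V)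
    (U ** (axis i (axis i (2 * d$i / r)) + axis j (axis j (2 * d$j / r))) ** V)"
proof -
  define X where "X = axis i (axis i (2 * d$i / r)) + axis j (axis j (2 * d$j / r))"
  have r2: "r\<^sup>2 = (d$i)\<^sup>2 + (d$j)\<^sup>2"
    using r by simp
  have "X \<in> chsh_matrices"
    unfolding X_def using ijk r by (intro normalised_two_entry_in_chsh_matrices) auto
  then have X: "U ** X ** V \<in> chsh_matrices"
    by (simp add: chsh_matrices_orthogonal_sandwich[OF U V])
  define S where "S = sqrt ((e$i)\<^sup>2 + (e$j)\<^sup>2)"
  have "r * (e$i * d$i + e$j * d$j) = (e$i * r) * d$i + (e$j * r) * d$j"
    by (simp add: algebra_simps)
  also have "\<dots> = (d$i * S) * d$i + (d$j * S) * d$j"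
    unfolding S_def ratio ..
  also have "\<dots> = ((d$i)\<^sup>2 + (d$j)\<^sup>2) * S"
    by (simp add: power2_eq_square algebra_simps)
  also have "\<dots> = r * (r * S)"
    by (simp only: r2[symmetric]) (simp add: power2_eq_square)
  finally have leading: "e$i * d$i + e$j * d$j = r * S"
    using r(2) by simp
  have "inner (U ** diag3 e ** V) (U ** X ** V) = e$i * (2 * d$i / r) + e$j * (2 * d$j / r)"
    using ijk by (simp add: inner_orthogonal_sandwich[OF U V] X_def inner_add_right
        inner_axis_axis_matrix diag3_def)
  also have "\<dots> = 2 * (e$i * d$i + e$j * d$j) / r"
    by (simp add: add_divide_distrib mult_ac)
  also have "\<dots> = 2 * S"
    using r(2) by (simp add: leading)
  finally have "inner (U ** diag3 e ** V) (U ** X ** V) = 2 * S" .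
  with X show ?thesis
    using inner_svd_le_leading[OF U V _ ijk ord] by (simp add: optimal_chsh_matrix_def X_def S_def)
qed

lemma leading_zero_imp_zero:
  fixes d :: "real^3"
  assumes "distinct [i, j, k]" "\<bar>d$j\<bar> \<ge> \<bar>d$k\<bar>" "sqrt ((d$i)\<^sup>2 + (d$j)\<^sup>2) = 0"
  shows "d = 0"
proof -
  have "d$i = 0" "d$j = 0" "d$k = 0"
    using assms(2,3) by (auto simp: add_nonneg_eq_0_iff)
  then show ?thesis
    using UNIV_3_distinct[OF assms(1)] by (auto simp: vec_eq_iff)
qed

lemma exists_optimal_chsh_matrix:
  assumes U: "orthogonal_matrix U" and V: "orthogonal_matrix V"
    and ijk: "distinct [i, j, k]" and ord: "\<bar>d$i\<bar> \<ge> \<bar>d$j\<bar>" "\<bar>d$j\<bar> \<ge> \<bar>d$k\<bar>"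
  shows "\<exists>M. optimal_chsh_matrix (U ** diag3 d ** V) M"
proof (cases "sqrt ((d$i)\<^sup>2 + (d$j)\<^sup>2) = 0")
  case True
  with ijk ord(2) have "d = 0"
    by (rule leading_zero_imp_zero)
  moreover have "axis 1 (axis 1 2) + axis 2 (axis 2 0) \<in> chsh_matrices"
    by (intro two_entry_in_chsh_matrices) simp_all
  ultimately show ?thesis
    by (auto simp: optimal_chsh_matrix_def)
next
  case False
  then have "sqrt ((d$i)\<^sup>2 + (d$j)\<^sup>2) > 0"
    by (simp add: order_le_neq_trans)
  from optimal_chsh_matrix_leading[OF U V ijk ord refl this refl refl] show ?thesis
    by blast
qed

section \<open>Common optimal CHSH operators\<close>

(* Conditions (2) and (3) of the theorem, with i, j, k the common ordering by absolute value. *)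
definition compatible_singular_values :: "real^3 \<Rightarrow> real^3 \<Rightarrow> bool" where
  "compatible_singular_values t f \<longleftrightarrow>
    (\<exists>i j k :: 3. distinct [i, j, k] \<and>
       \<bar>t $ i\<bar> \<ge> \<bar>t $ j\<bar> \<and> \<bar>t $ j\<bar> \<ge> \<bar>t $ k\<bar> \<and>
       \<bar>f $ i\<bar> \<ge> \<bar>f $ j\<bar> \<and> \<bar>f $ j\<bar> \<ge> \<bar>f $ k\<bar> \<and>
       t $ i * f $ j = t $ j * f $ i \<and>
       t $ i * sqrt ((f $ i)\<^sup>2 + (f $ j)\<^sup>2) = f $ i * sqrt ((t $ i)\<^sup>2 + (t $ j)\<^sup>2) \<and>
       t $ j * sqrt ((f $ i)\<^sup>2 + (f $ j)\<^sup>2) = f $ j * sqrt ((t $ i)\<^sup>2 + (t $ j)\<^sup>2))"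

lemma compatible_singular_values_scaled:
  assumes "c \<ge> 0" "c' \<ge> 0" "0 \<le> s2" "s2 \<le> s1" "\<bar>\<tau>\<bar> \<le> c * s2" "\<bar>\<tau>'\<bar> \<le> c' * s2"
  shows "compatible_singular_values (vector [c * s1, c * s2, \<tau>]) (vector [c' * s1, c' * s2, \<tau>'])"
proof -
  have "sqrt ((a * s1)\<^sup>2 + (a * s2)\<^sup>2) = a * sqrt (s1\<^sup>2 + s2\<^sup>2)" if "a \<ge> 0" for a
    using that by (simp add: power_mult_distrib real_sqrt_mult flip: distrib_left)
  moreover have "c * s2 \<le> c * s1" "c' * s2 \<le> c' * s1"
    using assms by (simp_all add: mult_left_mono)
  ultimately show ?thesis
    unfolding compatible_singular_values_def using assms
    by (intro exI[of _ 1] exI[of _ 2] exI[of _ 3]) (simp add: abs_of_nonneg mult_ac)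
qed

lemma common_optimal_imp_aligned_svd:
  assumes "optimal_chsh_matrix T M" "optimal_chsh_matrix F M"
  shows "\<exists>U V t f. orthogonal_matrix U \<and> orthogonal_matrix V \<and>
    T = U ** diag3 t ** V \<and> F = U ** diag3 f ** V \<and> compatible_singular_values t f"
proof -
  obtain W Z s where W: "orthogonal_matrix W" and Z: "orthogonal_matrix Z"
    and M: "M = W ** diag3 s ** Z" and s: "s$2 \<le> s$1" "\<bar>s$3\<bar> \<le> s$2"
    by (rule svd3)
  obtain c \<tau> where "c \<ge> 0" "\<bar>\<tau>\<bar> \<le> c * s$2" "T = W ** diag3 (vector [c * s$1, c * s$2, \<tau>]) ** Z"
    using optimal_chsh_matrix_svd[OF assms(1)[unfolded M] W Z s] .
  moreover obtain c' \<tau>' where "c' \<ge> 0" "\<bar>\<tau>'\<bar> \<le> c' * s$2"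
      "F = W ** diag3 (vector [c' * s$1, c' * s$2, \<tau>']) ** Z"
    using optimal_chsh_matrix_svd[OF assms(2)[unfolded M] W Z s] .
  moreover have "0 \<le> s$2"
    using s by linarith
  ultimately show ?thesis
    using W Z s compatible_singular_values_scaled by blast
qed

lemma aligned_svd_imp_common_optimal:
  assumes U: "orthogonal_matrix U" and V: "orthogonal_matrix V"
    and "compatible_singular_values t f"
  shows "\<exists>M. optimal_chsh_matrix (U ** diag3 t ** V) M \<and> optimal_chsh_matrix (U ** diag3 f ** V) M"
proof -
  obtain i j k :: 3 where ijk: "distinct [i, j, k]"
    and ord_t: "\<bar>t $ i\<bar> \<ge> \<bar>t $ j\<bar>" "\<bar>t $ j\<bar> \<ge> \<bar>t $ k\<bar>"
    and ord_f: "\<bar>f $ i\<bar> \<ge> \<bar>f $ j\<bar>" "\<bar>f $ j\<bar> \<ge> \<bar>f $ k\<bar>"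
    and ratio: "f $ i * sqrt ((t $ i)\<^sup>2 + (t $ j)\<^sup>2) = t $ i * sqrt ((f $ i)\<^sup>2 + (f $ j)\<^sup>2)"
      "f $ j * sqrt ((t $ i)\<^sup>2 + (t $ j)\<^sup>2) = t $ j * sqrt ((f $ i)\<^sup>2 + (f $ j)\<^sup>2)"
    using assms(3) unfolding compatible_singular_values_def by metis
  define r where "r = sqrt ((t $ i)\<^sup>2 + (t $ j)\<^sup>2)"
  show ?thesis
  proof (cases "r = 0")
    case True
    with ijk ord_t(2) have "t = 0"
      unfolding r_def by (rule leading_zero_imp_zero)
    moreover obtain M where "optimal_chsh_matrix (U ** diag3 f ** V) M"
      using exists_optimal_chsh_matrix[OF U V ijk ord_f] by blast
    ultimately show ?thesis
      by (auto simp: optimal_chsh_matrix_def)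
  next
    case False
    then have "r > 0"
      by (simp add: r_def order_le_neq_trans)
    moreover have "t $ i * r = t $ i * sqrt ((t $ i)\<^sup>2 + (t $ j)\<^sup>2)"
      "t $ j * r = t $ j * sqrt ((t $ i)\<^sup>2 + (t $ j)\<^sup>2)"
      by (simp_all add: r_def)
    ultimately show ?thesis
      using optimal_chsh_matrix_leading[OF U V ijk ord_t r_def]
        optimal_chsh_matrix_leading[OF U V ijk ord_f r_def \<open>r > 0\<close> ratio[folded r_def]]
      by blast
  qed
qed

theorem theorem1:
  fixes \<rho> \<rho>' :: "complex^(2 \<times> 2)^(2 \<times> 2)"
  assumes "two_qubit_state \<rho>" and "two_qubit_state \<rho>'"
  shows "(\<exists>S. optimal_chsh \<rho> S \<and> optimal_chsh \<rho>' S) \<longleftrightarrow>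
    (\<exists>(U :: real^3^3) (V :: real^3^3) (t :: real^3) (f :: real^3).
       orthogonal_matrix U \<and> orthogonal_matrix V \<and>
       correlation \<rho> = U ** diag3 t ** V \<and> correlation \<rho>' = U ** diag3 f ** V \<and>
       (\<exists>i j k :: 3. distinct [i, j, k] \<and>
          \<bar>t $ i\<bar> \<ge> \<bar>t $ j\<bar> \<and> \<bar>t $ j\<bar> \<ge> \<bar>t $ k\<bar> \<and>
          \<bar>f $ i\<bar> \<ge> \<bar>f $ j\<bar> \<and> \<bar>f $ j\<bar> \<ge> \<bar>f $ k\<bar> \<and>
          t $ i * f $ j = t $ j * f $ i \<and>
          t $ i * sqrt ((f $ i)\<^sup>2 + (f $ j)\<^sup>2) = f $ i * sqrt ((t $ i)\<^sup>2 + (t $ j)\<^sup>2) \<and>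
          t $ j * sqrt ((f $ i)\<^sup>2 + (f $ j)\<^sup>2) = f $ j * sqrt ((t $ i)\<^sup>2 + (t $ j)\<^sup>2)))"
proof -
  have "(\<exists>M. optimal_chsh_matrix (correlation \<rho>) M \<and> optimal_chsh_matrix (correlation \<rho>') M) \<longleftrightarrow>
    (\<exists>U V t f. orthogonal_matrix U \<and> orthogonal_matrix V \<and>
       correlation \<rho> = U ** diag3 t ** V \<and> correlation \<rho>' = U ** diag3 f ** V \<and>
       compatible_singular_values t f)"
    using common_optimal_imp_aligned_svd aligned_svd_imp_common_optimal by metis
  then show ?thesis
    unfolding common_optimal_chsh_iff compatible_singular_values_def .
qed

end
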